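(* Let $U$ be a finite nonempty set, $(T,I,N)$ an IMTL triplet, $\widetilde{R}$ a $T$-preorder relation on $U$, $A$ a fuzzy set on $U$, and $L:\mathbb{R}\times\mathbb{R}\to\mathbb{R}^+$ a loss function of $\lor$-type. Let $\hat{A}:U\to[0,1]$ be an optimal solution of $$\text{minimize }\sum_{u\in U}L(A(u),\hat{A}(u))\quad\text{subject to } T(\widetilde{R}(u,v),\hat{A}(v))\le\hat{A}(u)\ (u,v\in U),\quad 0\le\hat{A}(u)\le1\ (u\in U),$$ and let $U^-=\{u;\hat{A}(u)<A(u)\}$, $U^0=\{u;\hat{A}(u)=A(u)\}$, $U^+=\{u;\hat{A}(u)>A(u)\}$. Then: for every $u\in U^+$ there is $v\in U^-\cup U^0$ such that $\widetilde{R}^+_{\hat{A}(v)}(v)$ is adjacent to $\widetilde{R}^-_{N(\hat{A}(u))}(u)$; and for every $u\in U^-$ there is $v\in U^+\cup U^0$ such that $\widetilde{R}^-_{N(\hat{A}(v))}(v)$ is adjacent to $\widetilde{R}^+_{\hat{A}(u)}(u)$.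
   Context: A residual triplet $(T,I,N)$ consists of a left-continuous $t$-norm $T$, its residual implicator $I(x,y)=\sup\{\beta\in[0,1]: T(x,\beta)\le y\}$ and $N(x)=I(x,0)$; it is IMTL if $N$ is involutive. $\widetilde{R}:U\times U\to[0,1]$ is a $T$-preorder if reflexive and $T$-transitive. Granules: $\widetilde{R}^+_\lambda(u)$ is the fuzzy set $w\mapsto T(\widetilde{R}(w,u),\lambda)$ and $\widetilde{R}^-_\lambda(v)$ is $w\mapsto T(\widetilde{R}(v,w),\lambda)$. Adjacency: for $x,y\in U$, $\widetilde{R}^-_{\lambda_2}(y)$ is adjacent to $\widetilde{R}^+_{\lambda_1}(x)$ if $\lambda_1=I(\lambda_2,N(\widetilde{R}(y,x)))$; $\widetilde{R}^+_{\lambda_1}(x)$ is adjacent to $\widetilde{R}^-_{\lambda_2}(y)$ if $\lambda_2=I(\lambda_1,N(\widetilde{R}(y,x)))$. A loss function $L$ is of $\lor$-type if for every real $a$: $L(a,a)=0$; $x\mapsto L(x,a)$ and $x\mapsto L(a,x)$ are increasing for $x>a$ and decreasing for $x<a$. *)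

theory Defs
  imports Complex_Main
begin

definition tnorm :: "(real \<Rightarrow> real \<Rightarrow> real) \<Rightarrow> bool" where
  "tnorm T \<longleftrightarrow>
     (\<forall>x\<in>{0..1}. \<forall>y\<in>{0..1}. T x y \<in> {0..1}) \<and>
     (\<forall>x\<in>{0..1}. \<forall>y\<in>{0..1}. T x y = T y x) \<and>
     (\<forall>x\<in>{0..1}. \<forall>y\<in>{0..1}. \<forall>z\<in>{0..1}. T (T x y) z = T x (T y z)) \<and>
     (\<forall>x\<in>{0..1}. \<forall>x'\<in>{0..1}. \<forall>y\<in>{0..1}. x \<le> x' \<longrightarrow> T x y \<le> T x' y) \<and>
     (\<forall>x\<in>{0..1}. T x 1 = x)"

definition left_continuous_tnorm :: "(real \<Rightarrow> real \<Rightarrow> real) \<Rightarrow> bool" where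
  "left_continuous_tnorm T \<longleftrightarrow> tnorm T \<and>
     (\<forall>y\<in>{0..1}. \<forall>x\<in>{0<..1}. ((\<lambda>z. T z y) \<longlongrightarrow> T x y) (at_left x))"

definition residual :: "(real \<Rightarrow> real \<Rightarrow> real) \<Rightarrow> real \<Rightarrow> real \<Rightarrow> real" where
  "residual T x y = Sup {\<beta>. 0 \<le> \<beta> \<and> \<beta> \<le> 1 \<and> T x \<beta> \<le> y}"

definition resneg :: "(real \<Rightarrow> real \<Rightarrow> real) \<Rightarrow> real \<Rightarrow> real" where
  "resneg T x = residual T x 0"

text \<open>IMTL triplet (T, I, N): T left-continuous, I its residual, N(x)=I(x,0) involutive.\<close>
definition IMTL :: "(real \<Rightarrow> real \<Rightarrow> real) \<Rightarrow> bool" where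
  "IMTL T \<longleftrightarrow> left_continuous_tnorm T \<and>
     (\<forall>x\<in>{0..1}. resneg T (resneg T x) = x)"

definition T_preorder :: "(real \<Rightarrow> real \<Rightarrow> real) \<Rightarrow> 'a set \<Rightarrow> ('a \<Rightarrow> 'a \<Rightarrow> real) \<Rightarrow> bool" where
  "T_preorder T U R \<longleftrightarrow>
     (\<forall>u\<in>U. \<forall>v\<in>U. R u v \<in> {0..1}) \<and>
     (\<forall>u\<in>U. R u u = 1) \<and>
     (\<forall>u\<in>U. \<forall>v\<in>U. \<forall>w\<in>U. T (R u v) (R v w) \<le> R u w)"

definition fuzzy_set_on :: "'a set \<Rightarrow> ('a \<Rightarrow> real) \<Rightarrow> bool" where
  "fuzzy_set_on U A \<longleftrightarrow> (\<forall>u\<in>U. A u \<in> {0..1})"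

definition vee_type_loss :: "(real \<Rightarrow> real \<Rightarrow> real) \<Rightarrow> bool" where
  "vee_type_loss L \<longleftrightarrow>
     (\<forall>x y. 0 \<le> L x y) \<and>
     (\<forall>a. L a a = 0 \<and>
        (\<forall>x y. a < x \<and> x < y \<longrightarrow> L x a < L y a \<and> L a x < L a y) \<and>
        (\<forall>x y. x < y \<and> y < a \<longrightarrow> L y a < L x a \<and> L a y < L a x))"

definition feasible :: "(real \<Rightarrow> real \<Rightarrow> real) \<Rightarrow> 'a set \<Rightarrow> ('a \<Rightarrow> 'a \<Rightarrow> real) \<Rightarrow> ('a \<Rightarrow> real) \<Rightarrow> bool" where
  "feasible T U R B \<longleftrightarrow>
     (\<forall>u\<in>U. \<forall>v\<in>U. T (R u v) (B v) \<le> B u) \<and> (\<forall>u\<in>U. 0 \<le> B u \<and> B u \<le> 1)"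

definition optimal_solution ::
  "(real \<Rightarrow> real \<Rightarrow> real) \<Rightarrow> 'a set \<Rightarrow> ('a \<Rightarrow> 'a \<Rightarrow> real) \<Rightarrow> (real \<Rightarrow> real \<Rightarrow> real)
     \<Rightarrow> ('a \<Rightarrow> real) \<Rightarrow> ('a \<Rightarrow> real) \<Rightarrow> bool" where
  "optimal_solution T U R L A Ah \<longleftrightarrow> feasible T U R Ah \<and>
     (\<forall>B. feasible T U R B \<longrightarrow> (\<Sum>u\<in>U. L (A u) (Ah u)) \<le> (\<Sum>u\<in>U. L (A u) (B u)))"

text \<open>Granules R^+_lam(u) = (w |-> T(R(w,u),lam)) and R^-_lam(v) = (w |-> T(R(v,w),lam)),
  represented by their labels (point, level).\<close>

text \<open>R^-_{l2}(y) is adjacent to R^+_{l1}(x)  iff  l1 = I(l2, N(R(y,x))).\<close>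
definition minus_adj_plus ::
  "(real \<Rightarrow> real \<Rightarrow> real) \<Rightarrow> ('a \<Rightarrow> 'a \<Rightarrow> real) \<Rightarrow> 'a \<Rightarrow> real \<Rightarrow> 'a \<Rightarrow> real \<Rightarrow> bool" where
  "minus_adj_plus T R y l2 x l1 \<longleftrightarrow> l1 = residual T l2 (resneg T (R y x))"

text \<open>R^+_{l1}(x) is adjacent to R^-_{l2}(y)  iff  l2 = I(l1, N(R(y,x))).\<close>
definition plus_adj_minus ::
  "(real \<Rightarrow> real \<Rightarrow> real) \<Rightarrow> ('a \<Rightarrow> 'a \<Rightarrow> real) \<Rightarrow> 'a \<Rightarrow> real \<Rightarrow> 'a \<Rightarrow> real \<Rightarrow> bool" where
  "plus_adj_minus T R x l1 y l2 \<longleftrightarrow> l2 = residual T l1 (resneg T (R y x))"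

end

theory Submission
  imports Defs
begin

text \<open>
  The sup-\<open>T\<close> composition of \<open>R\<close> with \<open>C = min A Ah\<close>, i.e.
  \<open>w \<mapsto> max\<^sub>v T (R w v) (C v)\<close>, is the least feasible fuzzy set above \<open>C\<close>. It lies
  between \<open>A\<close> and \<open>Ah\<close>, and a \<open>\<or>\<close>-type loss strictly decreases when a value moves towards
  the data, so optimality forces it to be \<open>Ah\<close>. Hence \<open>Ah u = T (R u v) (C v)\<close> for some
  \<open>v\<close>; as long as \<open>C v < Ah v\<close>, passing from \<open>u\<close> to \<open>v\<close> strictly shrinks the set of such
  witnesses, so eventually \<open>C v = Ah v\<close>, i.e. \<open>Ah v \<le> A v\<close> and \<open>Ah u = T (R u v) (Ah v)\<close>.
  Since \<open>I (x, N y) = N (T x y)\<close>, this equation is the first adjacency. The second one is the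
  same argument for \<open>N \<circ> Ah\<close>, the converse relation and \<open>N (max A Ah)\<close>: in an IMTL triplet
  \<open>N\<close> is an involution and \<open>T a b \<le> c \<longleftrightarrow> T a (N c) \<le> N b\<close> transfers feasibility.
\<close>

context
  fixes T :: "real \<Rightarrow> real \<Rightarrow> real"
  assumes T: "tnorm T"
begin

lemma tnorm_closed: "x \<in> {0..1} \<Longrightarrow> y \<in> {0..1} \<Longrightarrow> T x y \<in> {0..1}"
  using T unfolding tnorm_def by blast

lemma tnorm_commute: "x \<in> {0..1} \<Longrightarrow> y \<in> {0..1} \<Longrightarrow> T x y = T y x"
  using T unfolding tnorm_def by blast

lemma tnorm_assoc:
  "x \<in> {0..1} \<Longrightarrow> y \<in> {0..1} \<Longrightarrow> z \<in> {0..1} \<Longrightarrow> T (T x y) z = T x (T y z)"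
  using T unfolding tnorm_def by blast

lemma tnorm_left_commute:
  "x \<in> {0..1} \<Longrightarrow> y \<in> {0..1} \<Longrightarrow> z \<in> {0..1} \<Longrightarrow> T x (T y z) = T y (T x z)"
  by (metis tnorm_assoc tnorm_commute)

lemma tnorm_mono_left:
  "x \<le> x' \<Longrightarrow> x \<in> {0..1} \<Longrightarrow> x' \<in> {0..1} \<Longrightarrow> y \<in> {0..1} \<Longrightarrow> T x y \<le> T x' y"
  using T unfolding tnorm_def by blast

lemma tnorm_mono_right:
  "y \<le> y' \<Longrightarrow> x \<in> {0..1} \<Longrightarrow> y \<in> {0..1} \<Longrightarrow> y' \<in> {0..1} \<Longrightarrow> T x y \<le> T x y'"
  by (metis tnorm_commute tnorm_mono_left)

lemma tnorm_one_right: "x \<in> {0..1} \<Longrightarrow> T x 1 = x"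
  using T unfolding tnorm_def by blast

lemma tnorm_one_left: "x \<in> {0..1} \<Longrightarrow> T 1 x = x"
  using tnorm_commute[of 1 x] tnorm_one_right[of x] by simp

lemma tnorm_zero_right: "x \<in> {0..1} \<Longrightarrow> T x 0 = 0"
  using tnorm_mono_left[of x 1 0] tnorm_one_left[of 0] tnorm_closed[of x 0] by simp

end

lemma left_continuous_tnorm_imp_tnorm: "left_continuous_tnorm T \<Longrightarrow> tnorm T"
  by (simp add: left_continuous_tnorm_def)

context
  fixes T :: "real \<Rightarrow> real \<Rightarrow> real"
  assumes T: "left_continuous_tnorm T"
begin

private lemmas tnorm_T = left_continuous_tnorm_imp_tnorm[OF T]

lemma residual_in_unit:
  assumes "x \<in> {0..1}" and "y \<in> {0..1}"
  shows "residual T x y \<in> {0..1}"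
proof -
  have "0 \<in> {\<beta>. 0 \<le> \<beta> \<and> \<beta> \<le> 1 \<and> T x \<beta> \<le> y}"
    using assms tnorm_zero_right[OF tnorm_T] by simp
  then show ?thesis
    unfolding residual_def by (auto intro: cSup_upper2 cSup_least bdd_aboveI[of _ 1])
qed

text \<open>The supremum defining the residual is attained: this is where left continuity enters.\<close>
lemma tnorm_residual_le:
  assumes x: "x \<in> {0..1}" and y: "y \<in> {0..1}"
  shows "T x (residual T x y) \<le> y"
proof -
  define S where "S = {\<beta>. 0 \<le> \<beta> \<and> \<beta> \<le> 1 \<and> T x \<beta> \<le> y}"
  define r where "r = residual T x y"
  have r_Sup: "r = Sup S" and r: "r \<in> {0..1}"
    using residual_in_unit[OF x y] by (simp_all add: r_def residual_def S_def)
  have "0 \<in> S" using tnorm_zero_right[OF tnorm_T x] y by (simp add: S_def)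
  then have S_ne: "S \<noteq> {}" by blast
  show ?thesis
  proof (cases "r = 0")
    case True
    then show ?thesis using tnorm_zero_right[OF tnorm_T x] y by (simp add: r_def)
  next
    case False
    then have r_pos: "0 < r" using r by simp
    have "((\<lambda>z. T z x) \<longlongrightarrow> T r x) (at_left r)"
      using T r_pos r x unfolding left_continuous_tnorm_def by simp
    moreover have "eventually (\<lambda>z. T z x \<le> y) (at_left r)"
      using eventually_at_left_real[OF r_pos]
    proof (rule eventually_mono)
      fix z assume z: "z \<in> {0<..<r}"
      obtain b where b: "b \<in> S" "z < b"
        using less_cSupD[of S z] S_ne z r_Sup by auto
      have "T z x \<le> T b x"
        using tnorm_mono_left[OF tnorm_T] z b x by (simp add: S_def)
      also have "\<dots> = T x b"
        using tnorm_commute[OF tnorm_T] b x by (simp add: S_def)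
      finally show "T z x \<le> y" using b by (simp add: S_def)
    qed
    ultimately have "T r x \<le> y" by (rule tendsto_upperbound) simp
    then show ?thesis using tnorm_commute[OF tnorm_T x r] by (simp add: r_def)
  qed
qed

lemma residual_galois:
  assumes x: "x \<in> {0..1}" and y: "y \<in> {0..1}" and z: "z \<in> {0..1}"
  shows "T x z \<le> y \<longleftrightarrow> z \<le> residual T x y"
proof
  assume "T x z \<le> y"
  then show "z \<le> residual T x y"
    unfolding residual_def using z by (intro cSup_upper bdd_aboveI[of _ 1]) auto
next
  assume "z \<le> residual T x y"
  then have "T x z \<le> T x (residual T x y)"
    using tnorm_mono_right[OF tnorm_T] residual_in_unit[OF x y] x z by blast
  then show "T x z \<le> y" using tnorm_residual_le[OF x y] by simp
qed

lemma resneg_in_unit: "x \<in> {0..1} \<Longrightarrow> resneg T x \<in> {0..1}"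
  unfolding resneg_def using residual_in_unit[of x 0] by simp

lemma tnorm_eq_0_iff_le_resneg:
  assumes "x \<in> {0..1}" and "z \<in> {0..1}"
  shows "T x z = 0 \<longleftrightarrow> z \<le> resneg T x"
  using residual_galois[of x 0 z] tnorm_closed[OF tnorm_T, of x z] assms
  unfolding resneg_def by force

lemma residual_resneg:
  assumes x: "x \<in> {0..1}" and y: "y \<in> {0..1}"
  shows "residual T x (resneg T y) = resneg T (T x y)"
proof -
  have xy: "T x y \<in> {0..1}" using tnorm_closed[OF tnorm_T x y] .
  have "z \<le> residual T x (resneg T y) \<longleftrightarrow> z \<le> resneg T (T x y)" if z: "z \<in> {0..1}" for z
  proof -
    have xz: "T x z \<in> {0..1}" using tnorm_closed[OF tnorm_T x z] .
    have "z \<le> residual T x (resneg T y) \<longleftrightarrow> T y (T x z) = 0"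
      using residual_galois[OF x resneg_in_unit[OF y] z] tnorm_eq_0_iff_le_resneg[OF y xz] by simp
    also have "T y (T x z) = T (T x y) z"
      using tnorm_left_commute[OF tnorm_T y x z] tnorm_assoc[OF tnorm_T x y z] by simp
    finally show ?thesis using tnorm_eq_0_iff_le_resneg[OF xy z] by simp
  qed
  then show ?thesis
    using residual_in_unit[OF x resneg_in_unit[OF y]] resneg_in_unit[OF xy]
    by (meson atLeastAtMost_iff order.antisym order.refl)
qed

lemma resneg_antimono:
  assumes "x \<le> x'" and x: "x \<in> {0..1}" and x': "x' \<in> {0..1}"
  shows "resneg T x' \<le> resneg T x"
proof -
  have n: "resneg T x' \<in> {0..1}" using resneg_in_unit[OF x'] .
  have "T x (resneg T x') \<le> T x' (resneg T x')"
    using tnorm_mono_left[OF tnorm_T assms n] .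
  also have "T x' (resneg T x') = 0" using tnorm_eq_0_iff_le_resneg[OF x' n] by simp
  finally have "T x (resneg T x') = 0"
    using tnorm_closed[OF tnorm_T x n] by simp
  then show ?thesis using tnorm_eq_0_iff_le_resneg[OF x n] by simp
qed

end


lemma IMTL_imp_left_continuous_tnorm: "IMTL T \<Longrightarrow> left_continuous_tnorm T"
  by (simp add: IMTL_def)

context
  fixes T :: "real \<Rightarrow> real \<Rightarrow> real"
  assumes T: "IMTL T"
begin

private lemmas lc_of_IMTL = IMTL_imp_left_continuous_tnorm[OF T]
private lemmas tnorm_of_IMTL = left_continuous_tnorm_imp_tnorm[OF lc_of_IMTL]

lemma resneg_resneg: "x \<in> {0..1} \<Longrightarrow> resneg T (resneg T x) = x"
  using T by (simp add: IMTL_def)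

lemma resneg_eq_iff:
  assumes "x \<in> {0..1}" and "y \<in> {0..1}"
  shows "resneg T x = resneg T y \<longleftrightarrow> x = y"
  by (metis assms resneg_resneg)

lemma resneg_between_resneg_max:
  assumes a: "a \<in> {0..1}" and h: "h \<in> {0..1}" and b: "b \<in> {0..1}"
    and lower: "resneg T (max a h) \<le> b" and upper: "b \<le> resneg T h"
  shows "h \<le> resneg T b \<and> resneg T b \<le> max a h"
proof
  have "h = resneg T (resneg T h)" using resneg_resneg[OF h] by simp
  also have "\<dots> \<le> resneg T b"
    using resneg_antimono[OF lc_of_IMTL upper b] resneg_in_unit[OF lc_of_IMTL h] by simp
  finally show "h \<le> resneg T b" .
next
  have max: "max a h \<in> {0..1}" using a h by force
  have "resneg T b \<le> resneg T (resneg T (max a h))"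
    using resneg_antimono[OF lc_of_IMTL lower _ b] resneg_in_unit[OF lc_of_IMTL max] by simp
  then show "resneg T b \<le> max a h" using resneg_resneg[OF max] by simp
qed

lemma tnorm_contrapos:
  assumes a: "a \<in> {0..1}" and b: "b \<in> {0..1}" and c: "c \<in> {0..1}"
  shows "T a b \<le> c \<longleftrightarrow> T a (resneg T c) \<le> resneg T b"
proof -
  define d where "d = resneg T c"
  have d: "d \<in> {0..1}" using resneg_in_unit[OF lc_of_IMTL c] by (simp add: d_def)
  have ab: "T a b \<in> {0..1}" and ad: "T a d \<in> {0..1}"
    using tnorm_closed[OF tnorm_of_IMTL] a b d by auto
  have "T a b \<le> c \<longleftrightarrow> T d (T a b) = 0"
    using tnorm_eq_0_iff_le_resneg[OF lc_of_IMTL d ab] resneg_resneg[OF c] by (simp add: d_def)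
  also have "T d (T a b) = T b (T a d)"
    using tnorm_left_commute[OF tnorm_of_IMTL] tnorm_commute[OF tnorm_of_IMTL b d] a b d by metis
  also have "T b (T a d) = 0 \<longleftrightarrow> T a d \<le> resneg T b"
    using tnorm_eq_0_iff_le_resneg[OF lc_of_IMTL b ad] .
  finally show ?thesis by (simp add: d_def)
qed

lemma feasible_converse_resneg:
  assumes R: "\<forall>u\<in>U. \<forall>v\<in>U. R u v \<in> {0..1}" and B: "feasible T U R B"
  shows "feasible T U (\<lambda>u v. R v u) (\<lambda>u. resneg T (B u))"
  unfolding feasible_def
proof (rule conjI; intro ballI)
  fix u v assume uv: "u \<in> U" "v \<in> U"
  have "T (R v u) (B u) \<le> B v" and "R v u \<in> {0..1}" and "B u \<in> {0..1}" and "B v \<in> {0..1}"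
    using B R uv by (simp_all add: feasible_def)
  then show "T (R v u) (resneg T (B v)) \<le> resneg T (B u)"
    using tnorm_contrapos by blast
next
  fix u assume "u \<in> U"
  then show "0 \<le> resneg T (B u) \<and> resneg T (B u) \<le> 1"
    using resneg_in_unit[OF lc_of_IMTL] B by (simp add: feasible_def)
qed

end

definition sup_T_comp ::
  "(real \<Rightarrow> real \<Rightarrow> real) \<Rightarrow> 'a set \<Rightarrow> ('a \<Rightarrow> 'a \<Rightarrow> real) \<Rightarrow> ('a \<Rightarrow> real) \<Rightarrow> 'a \<Rightarrow> real" where
  "sup_T_comp T U R C w = Max ((\<lambda>v. T (R w v) (C v)) ` U)"

definition sup_T_comp_witnesses ::
  "(real \<Rightarrow> real \<Rightarrow> real) \<Rightarrow> 'a set \<Rightarrow> ('a \<Rightarrow> 'a \<Rightarrow> real) \<Rightarrow> ('a \<Rightarrow> real) \<Rightarrow> 'a \<Rightarrow> 'a set" where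
  "sup_T_comp_witnesses T U R C w = {v \<in> U. sup_T_comp T U R C w = T (R w v) (C v)}"

lemma T_preorder_converse:
  assumes "tnorm T" and "T_preorder T U R"
  shows "T_preorder T U (\<lambda>u v. R v u)"
  using assms tnorm_commute[OF assms(1)] unfolding T_preorder_def by metis

context
  fixes T :: "real \<Rightarrow> real \<Rightarrow> real" and U :: "'a set" and R :: "'a \<Rightarrow> 'a \<Rightarrow> real"
    and C :: "'a \<Rightarrow> real"
  assumes T: "tnorm T" and fin: "finite U" and ne: "U \<noteq> {}" and R: "T_preorder T U R"
    and C: "\<forall>v\<in>U. C v \<in> {0..1}"
begin

private lemma R_unit: "u \<in> U \<Longrightarrow> v \<in> U \<Longrightarrow> R u v \<in> {0..1}"
  using R by (simp add: T_preorder_def)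

private lemma R_trans_comp:
  assumes "u \<in> U" "v \<in> U" "w \<in> U"
  shows "T (R u v) (T (R v w) (C w)) \<le> T (R u w) (C w)"
proof -
  have "T (R u v) (T (R v w) (C w)) = T (T (R u v) (R v w)) (C w)"
    using tnorm_assoc[OF T] R_unit C assms by simp
  also have "\<dots> \<le> T (R u w) (C w)"
    using tnorm_mono_left[OF T] tnorm_closed[OF T] R_unit C R assms by (simp add: T_preorder_def)
  finally show ?thesis .
qed

lemma sup_T_comp_witnesses_nonempty: "sup_T_comp_witnesses T U R C w \<noteq> {}"
proof -
  have "sup_T_comp T U R C w \<in> (\<lambda>v. T (R w v) (C v)) ` U"
    unfolding sup_T_comp_def using fin ne by (intro Max_in) auto
  then show ?thesis by (auto simp: sup_T_comp_witnesses_def)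
qed

lemma sup_T_comp_upper: "v \<in> U \<Longrightarrow> T (R w v) (C v) \<le> sup_T_comp T U R C w"
  unfolding sup_T_comp_def using fin by (intro Max_ge) auto

lemma sup_T_comp_ge: "w \<in> U \<Longrightarrow> C w \<le> sup_T_comp T U R C w"
  using sup_T_comp_upper[of w w] R C tnorm_one_left[OF T] by (simp add: T_preorder_def)

lemma sup_T_comp_least:
  assumes P: "feasible T U R P" and CP: "\<forall>v\<in>U. C v \<le> P v" and w: "w \<in> U"
  shows "sup_T_comp T U R C w \<le> P w"
proof -
  obtain v where v: "v \<in> U" "sup_T_comp T U R C w = T (R w v) (C v)"
    using sup_T_comp_witnesses_nonempty[of w] by (auto simp: sup_T_comp_witnesses_def)
  have "T (R w v) (C v) \<le> T (R w v) (P v)"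
    using tnorm_mono_right[OF T] CP C P R_unit v w by (simp add: feasible_def)
  also have "\<dots> \<le> P w" using P v w by (simp add: feasible_def)
  finally show ?thesis using v by simp
qed

lemma feasible_sup_T_comp: "feasible T U R (sup_T_comp T U R C)"
  unfolding feasible_def
proof (rule conjI; intro ballI)
  fix u v assume uv: "u \<in> U" "v \<in> U"
  obtain z where z: "z \<in> U" "sup_T_comp T U R C v = T (R v z) (C z)"
    using sup_T_comp_witnesses_nonempty[of v] by (auto simp: sup_T_comp_witnesses_def)
  have "T (R u v) (T (R v z) (C z)) \<le> T (R u z) (C z)"
    using R_trans_comp uv z by simp
  also have "\<dots> \<le> sup_T_comp T U R C u" using sup_T_comp_upper z by simp
  finally show "T (R u v) (sup_T_comp T U R C v) \<le> sup_T_comp T U R C u" using z by simp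
next
  fix w assume w: "w \<in> U"
  obtain v where v: "v \<in> U" "sup_T_comp T U R C w = T (R w v) (C v)"
    using sup_T_comp_witnesses_nonempty[of w] by (auto simp: sup_T_comp_witnesses_def)
  then show "0 \<le> sup_T_comp T U R C w \<and> sup_T_comp T U R C w \<le> 1"
    using tnorm_closed[OF T] R_unit C w by simp
qed

lemma sup_T_comp_witnesses_psubset:
  assumes x: "x \<in> U" and w: "w \<in> sup_T_comp_witnesses T U R C x"
    and strict: "C w \<noteq> sup_T_comp T U R C w"
  shows "sup_T_comp_witnesses T U R C w \<subset> sup_T_comp_witnesses T U R C x"
proof -
  let ?P = "sup_T_comp T U R C"
  have wU: "w \<in> U" and Px: "?P x = T (R x w) (C w)"
    using w by (auto simp: sup_T_comp_witnesses_def)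
  have "z \<in> sup_T_comp_witnesses T U R C x" if z: "z \<in> sup_T_comp_witnesses T U R C w" for z
  proof -
    have zU: "z \<in> U" and Pw: "?P w = T (R w z) (C z)"
      using z by (auto simp: sup_T_comp_witnesses_def)
    have "?P x \<le> T (R x w) (?P w)"
      using Px tnorm_mono_right[OF T] sup_T_comp_ge feasible_sup_T_comp R_unit C x wU
      by (simp add: feasible_def)
    also have "\<dots> \<le> T (R x z) (C z)" using Pw R_trans_comp x wU zU by simp
    also have "\<dots> \<le> ?P x" using sup_T_comp_upper zU by simp
    finally show ?thesis using zU by (simp add: sup_T_comp_witnesses_def)
  qed
  moreover have "w \<notin> sup_T_comp_witnesses T U R C w"
    using strict tnorm_one_left[OF T] R C wU by (simp add: sup_T_comp_witnesses_def T_preorder_def)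
  ultimately show ?thesis using w by blast
qed

lemma sup_T_comp_exact_witness:
  assumes u: "u \<in> U"
  shows "\<exists>v\<in>U. C v = sup_T_comp T U R C v \<and>
           sup_T_comp T U R C u = T (R u v) (sup_T_comp T U R C v)"
proof -
  let ?P = "sup_T_comp T U R C" and ?W = "sup_T_comp_witnesses T U R C"
  have "\<exists>v\<in>?W x. C v = ?P v" if "x \<in> U" for x
    using that
  proof (induction "card (?W x)" arbitrary: x rule: less_induct)
    case less
    obtain w where w: "w \<in> ?W x" using sup_T_comp_witnesses_nonempty by blast
    show ?case
    proof (cases "C w = ?P w")
      case True
      then show ?thesis using w by blast
    next
      case False
      then have sub: "?W w \<subset> ?W x" using sup_T_comp_witnesses_psubset less.prems w by blast
      moreover have "finite (?W x)" using fin by (simp add: sup_T_comp_witnesses_def)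
      ultimately have "card (?W w) < card (?W x)" by (rule psubset_card_mono[rotated])
      moreover have "w \<in> U" using w by (simp add: sup_T_comp_witnesses_def)
      ultimately show ?thesis using less.hyps sub by blast
    qed
  qed
  then obtain v where "v \<in> ?W u" and "C v = ?P v" using u by blast
  then show ?thesis by (auto simp: sup_T_comp_witnesses_def)
qed

end

lemma vee_type_loss_less_between:
  assumes L: "vee_type_loss L" and x: "min a b \<le> x" "x \<le> max a b" "x \<noteq> b"
  shows "L a x < L a b"
proof -
  have nonneg: "\<And>p q. 0 \<le> L p q" and zero: "L a a = 0"
    and up: "\<And>p q. a < p \<Longrightarrow> p < q \<Longrightarrow> L a p < L a q"
    and down: "\<And>p q. p < q \<Longrightarrow> q < a \<Longrightarrow> L a q < L a p"
    using L unfolding vee_type_loss_def by blast+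
  consider "a < b" "a \<le> x" "x < b" | "b < a" "b < x" "x \<le> a"
    using x by (cases a b rule: linorder_cases) auto
  then show ?thesis
  proof cases
    case 1
    show ?thesis
    proof (cases "x = a")
      case True
      have "L a ((a + b) / 2) < L a b" using up 1 by simp
      then show ?thesis using True zero nonneg[of a "(a + b) / 2"] by simp
    qed (use up 1 in simp)
  next
    case 2
    show ?thesis
    proof (cases "x = a")
      case True
      have "L a ((a + b) / 2) < L a b" using down 2 by simp
      then show ?thesis using True zero nonneg[of a "(a + b) / 2"] by simp
    qed (use down 2 in simp)
  qed
qed

lemma optimal_solution_unique_between:
  assumes L: "vee_type_loss L" and fin: "finite U"
    and opt: "optimal_solution T U R L A Ah" and B: "feasible T U R B"
    and between: "\<forall>w\<in>U. min (A w) (Ah w) \<le> B w \<and> B w \<le> max (A w) (Ah w)"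
  shows "\<forall>w\<in>U. B w = Ah w"
proof (rule ccontr)
  assume "\<not> ?thesis"
  then obtain w where w: "w \<in> U" "B w \<noteq> Ah w" by auto
  have less: "L (A x) (B x) < L (A x) (Ah x)" if "x \<in> U" "B x \<noteq> Ah x" for x
    using vee_type_loss_less_between[OF L, of "A x" "Ah x" "B x"] between that by simp
  have le: "\<forall>x\<in>U. L (A x) (B x) \<le> L (A x) (Ah x)"
  proof
    fix x assume "x \<in> U"
    then show "L (A x) (B x) \<le> L (A x) (Ah x)" using less[of x] by (cases "B x = Ah x") auto
  qed
  have "(\<Sum>x\<in>U. L (A x) (B x)) < (\<Sum>x\<in>U. L (A x) (Ah x))"
    using sum_strict_mono_ex1[OF fin le] less[OF w] w(1) by blast
  moreover have "(\<Sum>x\<in>U. L (A x) (Ah x)) \<le> (\<Sum>x\<in>U. L (A x) (B x))"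
    using opt B unfolding optimal_solution_def by blast
  ultimately show False by simp
qed

lemma optimal_solution_eq_sup_T_comp:
  assumes T: "tnorm T" and fin: "finite U" and ne: "U \<noteq> {}" and R: "T_preorder T U R"
    and A: "fuzzy_set_on U A" and L: "vee_type_loss L" and opt: "optimal_solution T U R L A Ah"
    and w: "w \<in> U"
  shows "sup_T_comp T U R (\<lambda>v. min (A v) (Ah v)) w = Ah w"
proof -
  let ?C = "\<lambda>v. min (A v) (Ah v)"
  have Ah: "feasible T U R Ah" using opt by (simp add: optimal_solution_def)
  have C: "\<forall>v\<in>U. ?C v \<in> {0..1}" using A Ah by (auto simp: fuzzy_set_on_def feasible_def)
  let ?B = "sup_T_comp T U R ?C"
  have B: "feasible T U R ?B" using feasible_sup_T_comp[OF T fin ne R C] .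
  have "\<forall>v\<in>U. min (A v) (Ah v) \<le> ?B v \<and> ?B v \<le> max (A v) (Ah v)"
  proof
    fix v assume v: "v \<in> U"
    have "?C v \<le> ?B v" using sup_T_comp_ge[OF T fin ne R C v] .
    moreover have "?B v \<le> Ah v" using sup_T_comp_least[OF T fin ne R C Ah _ v] by simp
    ultimately show "min (A v) (Ah v) \<le> ?B v \<and> ?B v \<le> max (A v) (Ah v)" by simp
  qed
  then show ?thesis using optimal_solution_unique_between[OF L fin opt B] w by blast
qed

lemma optimal_solution_eq_sup_T_comp_converse:
  assumes T: "IMTL T" and fin: "finite U" and ne: "U \<noteq> {}" and R: "T_preorder T U R"
    and A: "fuzzy_set_on U A" and L: "vee_type_loss L" and opt: "optimal_solution T U R L A Ah"
    and w: "w \<in> U"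
  shows "sup_T_comp T U (\<lambda>u v. R v u) (\<lambda>v. resneg T (max (A v) (Ah v))) w = resneg T (Ah w)"
proof -
  have lc: "left_continuous_tnorm T" using T by (rule IMTL_imp_left_continuous_tnorm)
  have tn: "tnorm T" using lc by (rule left_continuous_tnorm_imp_tnorm)
  let ?R' = "\<lambda>u v. R v u" and ?N = "resneg T"
  let ?C = "\<lambda>v. ?N (max (A v) (Ah v))"
  let ?B' = "sup_T_comp T U ?R' ?C"
  have R': "T_preorder T U ?R'" using T_preorder_converse[OF tn R] .
  have R_unit: "\<forall>u\<in>U. \<forall>v\<in>U. R u v \<in> {0..1}" and R'_unit: "\<forall>u\<in>U. \<forall>v\<in>U. ?R' u v \<in> {0..1}"
    using R by (auto simp: T_preorder_def)
  have Ah: "feasible T U R Ah" using opt by (simp add: optimal_solution_def)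
  have Ah_unit: "\<forall>v\<in>U. Ah v \<in> {0..1}" and A_unit: "\<forall>v\<in>U. A v \<in> {0..1}"
    using Ah A by (auto simp: feasible_def fuzzy_set_on_def)
  have C: "\<forall>v\<in>U. ?C v \<in> {0..1}"
    by (intro ballI resneg_in_unit[OF lc]) (use A_unit Ah_unit in force)
  have NAh: "feasible T U ?R' (\<lambda>v. ?N (Ah v))"
    using feasible_converse_resneg[OF T R_unit Ah] .
  have C_le: "\<forall>v\<in>U. ?C v \<le> ?N (Ah v)"
    using resneg_antimono[OF lc] A_unit Ah_unit by simp
  have B': "feasible T U ?R' ?B'" using feasible_sup_T_comp[OF tn fin ne R' C] .
  have B'_unit: "\<forall>v\<in>U. ?B' v \<in> {0..1}" using B' by (simp add: feasible_def)
  have B'_between: "\<forall>v\<in>U. ?C v \<le> ?B' v \<and> ?B' v \<le> ?N (Ah v)"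
    using sup_T_comp_ge[OF tn fin ne R' C] sup_T_comp_least[OF tn fin ne R' C NAh C_le] by simp
  have "feasible T U R (\<lambda>v. ?N (?B' v))"
    using feasible_converse_resneg[OF T R'_unit B'] by simp
  moreover have "\<forall>v\<in>U. min (A v) (Ah v) \<le> ?N (?B' v) \<and> ?N (?B' v) \<le> max (A v) (Ah v)"
  proof
    fix v assume v: "v \<in> U"
    then have "Ah v \<le> ?N (?B' v) \<and> ?N (?B' v) \<le> max (A v) (Ah v)"
      using resneg_between_resneg_max[OF T, of "A v" "Ah v" "?B' v"] A_unit Ah_unit B'_unit
        B'_between by simp
    then show "min (A v) (Ah v) \<le> ?N (?B' v) \<and> ?N (?B' v) \<le> max (A v) (Ah v)"
      using min.cobounded2[of "A v" "Ah v"] by linarith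
  qed
  ultimately have "?N (?B' w) = Ah w" using optimal_solution_unique_between[OF L fin opt] w by blast
  then show ?thesis using resneg_resneg[OF T] B'_unit w by metis
qed

lemma optimal_solution_generated_from_below:
  assumes T: "tnorm T" and fin: "finite U" and ne: "U \<noteq> {}" and R: "T_preorder T U R"
    and A: "fuzzy_set_on U A" and L: "vee_type_loss L" and opt: "optimal_solution T U R L A Ah"
    and u: "u \<in> U"
  shows "\<exists>v\<in>U. Ah v \<le> A v \<and> Ah u = T (R u v) (Ah v)"
proof -
  let ?C = "\<lambda>v. min (A v) (Ah v)"
  have "feasible T U R Ah" using opt by (simp add: optimal_solution_def)
  then have C: "\<forall>v\<in>U. ?C v \<in> {0..1}"
    using A by (simp add: fuzzy_set_on_def feasible_def min_le_iff_disj)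
  obtain v where v: "v \<in> U" "?C v = sup_T_comp T U R ?C v"
    and u_v: "sup_T_comp T U R ?C u = T (R u v) (sup_T_comp T U R ?C v)"
    using sup_T_comp_exact_witness[OF T fin ne R C u] by blast
  note Ah_eq = optimal_solution_eq_sup_T_comp[OF T fin ne R A L opt]
  have "Ah v \<le> A v" using v(2) Ah_eq[OF v(1)] by (metis min.cobounded1)
  moreover have "Ah u = T (R u v) (Ah v)" using u_v Ah_eq[OF u] Ah_eq[OF v(1)] by simp
  ultimately show ?thesis using v(1) by blast
qed

lemma optimal_solution_resneg_generated_from_above:
  assumes T: "IMTL T" and fin: "finite U" and ne: "U \<noteq> {}" and R: "T_preorder T U R"
    and A: "fuzzy_set_on U A" and L: "vee_type_loss L" and opt: "optimal_solution T U R L A Ah"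
    and u: "u \<in> U"
  shows "\<exists>v\<in>U. A v \<le> Ah v \<and> resneg T (Ah u) = T (R v u) (resneg T (Ah v))"
proof -
  have lc: "left_continuous_tnorm T" using T by (rule IMTL_imp_left_continuous_tnorm)
  have tn: "tnorm T" using lc by (rule left_continuous_tnorm_imp_tnorm)
  let ?C = "\<lambda>v. resneg T (max (A v) (Ah v))"
  have Ah: "feasible T U R Ah" using opt by (simp add: optimal_solution_def)
  then have max: "\<forall>v\<in>U. max (A v) (Ah v) \<in> {0..1}"
    using A by (simp add: fuzzy_set_on_def feasible_def le_max_iff_disj)
  then have C: "\<forall>v\<in>U. ?C v \<in> {0..1}" using resneg_in_unit[OF lc] by blast
  obtain v where v: "v \<in> U" "?C v = sup_T_comp T U (\<lambda>u v. R v u) ?C v"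
    and u_v: "sup_T_comp T U (\<lambda>u v. R v u) ?C u
                = T (R v u) (sup_T_comp T U (\<lambda>u v. R v u) ?C v)"
    using sup_T_comp_exact_witness[OF tn fin ne T_preorder_converse[OF tn R] C u] by blast
  note NAh_eq = optimal_solution_eq_sup_T_comp_converse[OF T fin ne R A L opt]
  have Ah_v: "Ah v \<in> {0..1}" using Ah v(1) by (simp add: feasible_def)
  have "resneg T (max (A v) (Ah v)) = resneg T (Ah v)" using v NAh_eq[OF v(1)] by simp
  then have "max (A v) (Ah v) = Ah v" using resneg_eq_iff[OF T] max v(1) Ah_v by blast
  moreover have "resneg T (Ah u) = T (R v u) (resneg T (Ah v))"
    using u_v NAh_eq[OF u] NAh_eq[OF v(1)] by simp
  ultimately show ?thesis using v(1) by (metis max.cobounded1)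
qed

lemma plus_adj_minus_iff:
  assumes T: "left_continuous_tnorm T" and l1: "l1 \<in> {0..1}" and R: "R y x \<in> {0..1}"
  shows "plus_adj_minus T R x l1 y l2 \<longleftrightarrow> l2 = resneg T (T (R y x) l1)"
  using residual_resneg[OF T l1 R] tnorm_commute[OF left_continuous_tnorm_imp_tnorm[OF T] l1 R]
  by (simp add: plus_adj_minus_def)

lemma minus_adj_plus_iff:
  assumes T: "left_continuous_tnorm T" and l2: "l2 \<in> {0..1}" and R: "R y x \<in> {0..1}"
  shows "minus_adj_plus T R y l2 x l1 \<longleftrightarrow> l1 = resneg T (T (R y x) l2)"
  using residual_resneg[OF T l2 R] tnorm_commute[OF left_continuous_tnorm_imp_tnorm[OF T] l2 R]
  by (simp add: minus_adj_plus_def)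

theorem corollary2:
  fixes U :: "'a set" and T :: "real \<Rightarrow> real \<Rightarrow> real" and R :: "'a \<Rightarrow> 'a \<Rightarrow> real"
    and A Ah :: "'a \<Rightarrow> real" and L :: "real \<Rightarrow> real \<Rightarrow> real"
  assumes "finite U" and "U \<noteq> {}"
    and "IMTL T"
    and "T_preorder T U R"
    and "fuzzy_set_on U A"
    and "vee_type_loss L"
    and "optimal_solution T U R L A Ah"
  shows "(\<forall>u\<in>{u\<in>U. Ah u > A u}. \<exists>v\<in>{v\<in>U. Ah v \<le> A v}.
            plus_adj_minus T R v (Ah v) u (resneg T (Ah u)))
       \<and> (\<forall>u\<in>{u\<in>U. Ah u < A u}. \<exists>v\<in>{v\<in>U. Ah v \<ge> A v}.
            minus_adj_plus T R v (resneg T (Ah v)) u (Ah u))"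
proof -
  have lc: "left_continuous_tnorm T" using assms(3) by (rule IMTL_imp_left_continuous_tnorm)
  have tn: "tnorm T" using lc by (rule left_continuous_tnorm_imp_tnorm)
  have R_unit: "\<forall>u\<in>U. \<forall>v\<in>U. R u v \<in> {0..1}" using assms(4) by (simp add: T_preorder_def)
  have Ah_unit: "\<forall>v\<in>U. Ah v \<in> {0..1}" using assms(7) by (simp add: optimal_solution_def feasible_def)
  show ?thesis
  proof (intro conjI ballI)
    fix u assume u: "u \<in> {u \<in> U. A u < Ah u}"
    then obtain v where v: "v \<in> U" "Ah v \<le> A v" "Ah u = T (R u v) (Ah v)"
      using optimal_solution_generated_from_below[OF tn assms(1,2,4-7)] by blast
    then have "plus_adj_minus T R v (Ah v) u (resneg T (Ah u))"
      using plus_adj_minus_iff[OF lc, of "Ah v" R u v] Ah_unit R_unit u by simp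
    then show "\<exists>v\<in>{v \<in> U. Ah v \<le> A v}. plus_adj_minus T R v (Ah v) u (resneg T (Ah u))"
      using v by blast
  next
    fix u assume u: "u \<in> {u \<in> U. Ah u < A u}"
    then obtain v where v: "v \<in> U" "A v \<le> Ah v" "resneg T (Ah u) = T (R v u) (resneg T (Ah v))"
      using optimal_solution_resneg_generated_from_above[OF assms(3,1,2,4-7)] by blast
    have "Ah u = resneg T (T (R v u) (resneg T (Ah v)))"
      using v(3)[symmetric] resneg_resneg[OF assms(3)] Ah_unit u by simp
    then have "minus_adj_plus T R v (resneg T (Ah v)) u (Ah u)"
      using minus_adj_plus_iff[OF lc, of "resneg T (Ah v)" R v u] resneg_in_unit[OF lc]
        Ah_unit R_unit u v(1) by simp
    then show "\<exists>v\<in>{v \<in> U. A v \<le> Ah v}. minus_adj_plus T R v (resneg T (Ah v)) u (Ah u)"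
      using v by blast
  qed
qed

end
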